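(* For $0<u<v<1$ and all $k\in\mathbb R$: (i) $(\mathcal E^c_u)'(k-)-(v-u)\le(\mathcal E^c_v)'(k-)\le(\mathcal E^c_u)'(k-)$; (ii) $(\mathcal E^c_u)'(k+)-(v-u)\le(\mathcal E^c_v)'(k+)\le(\mathcal E^c_u)'(k+)$.
   Context: Let $\mu,\nu$ be probability measures on $\mathbb R$ with finite first moments and $\mu\le_{cx}\nu$. Put $P_\eta(k)=\int(k-x)^+\eta(dx)$, $D=P_\nu-P_\mu$, and assume $\{k:D(k)>0\}$ is an interval. Let $G$ be the left-continuous quantile function of $\mu$. For $u\in(0,1)$ let $\mu_u(A)=\mu(A\cap(-\infty,G(u)))+\big(u-\mu((-\infty,G(u)))\big)\delta_{G(u)}(A)$ and $\mathcal E_u=P_\nu-P_{\mu_u}$. $f^c$ is the largest convex function lying below $f$; primes with $\pm$ denote one-sided derivatives. *)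

theory Defs
  imports "HOL-Probability.Probability"
begin

definition put_fun :: "real measure \<Rightarrow> real \<Rightarrow> real" where
  "put_fun \<eta> k = (\<integral>x. max (k - x) 0 \<partial>\<eta>)"

definition cx_le :: "real measure \<Rightarrow> real measure \<Rightarrow> bool" where
  "cx_le \<mu> \<nu> \<longleftrightarrow> (\<forall>\<phi>::real\<Rightarrow>real. convex_on UNIV \<phi> \<longrightarrow> integrable \<mu> \<phi> \<longrightarrow> integrable \<nu> \<phi> \<longrightarrow>
      (\<integral>x. \<phi> x \<partial>\<mu>) \<le> (\<integral>x. \<phi> x \<partial>\<nu>))"

definition quantile :: "real measure \<Rightarrow> real \<Rightarrow> real" where
  "quantile \<mu> u = Inf {x. measure \<mu> {..x} \<ge> u}"

definition mu_u :: "real measure \<Rightarrow> real \<Rightarrow> real measure" where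
  "mu_u \<mu> u = measure_of UNIV (sets borel)
     (\<lambda>A. emeasure \<mu> (A \<inter> {..<quantile \<mu> u})
          + ennreal (u - measure \<mu> {..<quantile \<mu> u}) * indicator A (quantile \<mu> u))"

definition E_fun :: "real measure \<Rightarrow> real measure \<Rightarrow> real \<Rightarrow> real \<Rightarrow> real" where
  "E_fun \<mu> \<nu> u k = put_fun \<nu> k - put_fun (mu_u \<mu> u) k"

definition convex_minorant :: "(real \<Rightarrow> real) \<Rightarrow> real \<Rightarrow> real" where
  "convex_minorant f x = Sup {g x | g. convex_on UNIV g \<and> (\<forall>y. g y \<le> f y)}"

definition left_deriv :: "(real \<Rightarrow> real) \<Rightarrow> real \<Rightarrow> real" where
  "left_deriv f k = Lim (at_left k) (\<lambda>h. (f h - f k) / (h - k))"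

definition right_deriv :: "(real \<Rightarrow> real) \<Rightarrow> real \<Rightarrow> real" where
  "right_deriv f k = Lim (at_right k) (\<lambda>h. (f h - f k) / (h - k))"

end

theory Submission
  imports Defs
begin

(* Since \<mu>_u \<le> \<mu>_v \<le> \<mu> as measures, of total masses u and v, the difference
   E_v - E_u = P_{\<mu>_u} - P_{\<mu>_v} is nonincreasing and (v - u)-Lipschitz, while
   E_u \<ge> P_\<nu> - P_\<mu> \<ge> 0 keeps the convex hulls finite.  The theorem is thus an instance of a
   comparison principle: if g - f has increments between -B and a per unit length, then
   (g^c)'(k\<plusminus>) \<le> (f^c)'(k\<plusminus>) + a.  Suppose s = (g^c)'(k+) exceeds t + a, where t = (f^c)'(k+).
   If g^c(k) < f^c(k) + (g - f)(k), a line through (k, g^c(k) + \<epsilon>) of slope t + a lies below g,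
   contradicting the maximality of g^c; otherwise the line through (k, f^c(k)) of slope s - a
   lies below f, contradicting the maximality of t.  Left derivatives follow by the reflection
   x \<mapsto> -x. *)

section \<open>Convex minorants and one-sided derivatives\<close>

lemma convex_on_reflect:
  fixes f :: "real \<Rightarrow> real"
  assumes "convex_on UNIV f"
  shows "convex_on UNIV (\<lambda>x. f (- x))"
proof (rule convex_onI)
  fix t x y :: real
  assume "0 < t" "t < 1"
  then show "f (- ((1 - t) *\<^sub>R x + t *\<^sub>R y)) \<le> (1 - t) * f (- x) + t * f (- y)"
    using convex_onD[OF assms, of t "- x" "- y"] by (simp add: algebra_simps)
qed simp

lemma convex_on_affine: "convex_on UNIV (\<lambda>x::real. c + m * (x - k))"
  by (rule convex_onI) (auto simp: algebra_simps)

lemma convex_minorant_le: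
  assumes "convex_on UNIV m" "\<And>x. m x \<le> f x"
  shows "convex_minorant f x \<le> f x"
  unfolding convex_minorant_def using assms by (intro cSup_least) auto

lemma convex_minorant_greatest:
  assumes "convex_on UNIV h" "\<And>x. h x \<le> f x"
  shows "h x \<le> convex_minorant f x"
  unfolding convex_minorant_def using assms by (intro cSup_upper bdd_aboveI[of _ "f x"]) auto

lemma convex_on_convex_minorant:
  assumes "convex_on UNIV m" "\<And>x. m x \<le> f x"
  shows "convex_on UNIV (convex_minorant f)"
proof (rule convex_onI)
  fix t x y :: real
  assume t: "0 < t" "t < 1"
  let ?z = "(1 - t) *\<^sub>R x + t *\<^sub>R y"
  show "convex_minorant f ?z \<le> (1 - t) * convex_minorant f x + t * convex_minorant f y"
    unfolding convex_minorant_def[of f ?z]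
  proof (rule cSup_least)
    show "{g ?z |g. convex_on UNIV g \<and> (\<forall>y. g y \<le> f y)} \<noteq> {}"
      using assms by blast
  next
    fix w assume "w \<in> {g ?z |g. convex_on UNIV g \<and> (\<forall>y. g y \<le> f y)}"
    then obtain g where g: "convex_on UNIV g" "\<And>y. g y \<le> f y" and w: "w = g ?z"
      by blast
    have "w \<le> (1 - t) * g x + t * g y"
      using convex_onD[OF g(1), of t x y] t w by simp
    also have "\<dots> \<le> (1 - t) * convex_minorant f x + t * convex_minorant f y"
      using convex_minorant_greatest[OF g] t by (intro add_mono mult_left_mono) auto
    finally show "w \<le> (1 - t) * convex_minorant f x + t * convex_minorant f y" .
  qed
qed simp

lemma convex_minorant_reflect:
  "convex_minorant (\<lambda>x. f (- x)) x = convex_minorant f (- x)"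
proof -
  have "{g x |g. convex_on UNIV g \<and> (\<forall>y. g y \<le> f (- y))}
      = {g (- x) |g. convex_on UNIV g \<and> (\<forall>y. g y \<le> f y)}" (is "?L = ?R")
  proof (intro equalityI subsetI)
    fix w assume "w \<in> ?L"
    then obtain g where g: "convex_on UNIV g" "\<And>y. g y \<le> f (- y)" and w: "w = g x"
      by blast
    have "convex_on UNIV (\<lambda>y. g (- y)) \<and> (\<forall>y. g (- y) \<le> f y)"
      using convex_on_reflect[OF g(1)] g(2)[of "- _"] by simp
    then show "w \<in> ?R"
      using w by (intro CollectI exI[of _ "\<lambda>y. g (- y)"]) simp
  next
    fix w assume "w \<in> ?R"
    then obtain g where g: "convex_on UNIV g" "\<And>y. g y \<le> f y" and w: "w = g (- x)"
      by blast
    have "convex_on UNIV (\<lambda>y. g (- y)) \<and> (\<forall>y. g (- y) \<le> f (- y))"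
      using convex_on_reflect[OF g(1)] g(2) by simp
    then show "w \<in> ?L"
      using w by (intro CollectI exI[of _ "\<lambda>y. g (- y)"]) simp
  qed
  then show ?thesis
    by (simp add: convex_minorant_def)
qed

lemma slope_swap: "((a::real) - b) / (c - d) = (b - a) / (d - c)"
  by (metis minus_diff_eq minus_divide_divide)

lemma convex_slope_mono:
  fixes \<phi> :: "real \<Rightarrow> real"
  assumes "convex_on UNIV \<phi>" "h1 < h2" "h1 \<noteq> k" "h2 \<noteq> k"
  shows "(\<phi> h1 - \<phi> k) / (h1 - k) \<le> (\<phi> h2 - \<phi> k) / (h2 - k)"
proof -
  consider "k < h1" | "h1 < k" "k < h2" | "h2 < k"
    using assms by linarith
  then show ?thesis
  proof cases
    case 1
    then show ?thesis
      using convex_on_slope_le(1)[OF assms(1) _ _ 1 assms(2)] by (simp add: slope_swap)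
  next
    case 2
    then show ?thesis
      using convex_on_slope_le[OF assms(1) _ _ 2] by (simp add: slope_swap)
  next
    case 3
    then show ?thesis
      using convex_on_slope_le(2)[OF assms(1) _ _ assms(2) 3] by simp
  qed
qed

lemma tendsto_right_deriv_convex:
  fixes \<phi> :: "real \<Rightarrow> real"
  assumes "convex_on UNIV \<phi>"
  shows "((\<lambda>h. (\<phi> h - \<phi> k) / (h - k)) \<longlongrightarrow> right_deriv \<phi> k) (at_right k)"
    and "right_deriv \<phi> k = Inf ((\<lambda>h. (\<phi> h - \<phi> k) / (h - k)) ` {k<..})"
proof -
  let ?q = "\<lambda>h. (\<phi> h - \<phi> k) / (h - k)"
  have mono: "?q a \<le> ?q b" if "k < a" "a \<le> b" for a b
    using convex_slope_mono[OF assms, of a b k] that by (cases "a = b") auto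
  have bound: "?q (k - 1) \<le> ?q a" if "k < a" for a
    using convex_slope_mono[OF assms, of "k - 1" a k] that by simp
  have "(?q \<longlongrightarrow> Inf (?q ` ({k<..} \<inter> UNIV))) (at k within ({k<..} \<inter> UNIV))"
    using mono bound by (intro Lim_right_bound) auto
  then have lim: "(?q \<longlongrightarrow> Inf (?q ` {k<..})) (at_right k)"
    by simp
  then show "right_deriv \<phi> k = Inf (?q ` {k<..})"
    unfolding right_deriv_def by (intro tendsto_Lim) auto
  with lim show "(?q \<longlongrightarrow> right_deriv \<phi> k) (at_right k)"
    by simp
qed

lemma right_deriv_convex_support:
  fixes \<phi> :: "real \<Rightarrow> real"
  assumes "convex_on UNIV \<phi>"
  shows "\<phi> k + right_deriv \<phi> k * (x - k) \<le> \<phi> x"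
  using convex_le_Inf_differential[OF assms, of k x] tendsto_right_deriv_convex(2)[OF assms]
  by (simp add: slope_swap)

lemma right_deriv_convex_ge:
  fixes \<phi> :: "real \<Rightarrow> real"
  assumes "convex_on UNIV \<phi>" and "\<And>x. k < x \<Longrightarrow> \<phi> k + m * (x - k) \<le> \<phi> x"
  shows "m \<le> right_deriv \<phi> k"
proof -
  have "m \<le> (\<phi> x - \<phi> k) / (x - k)" if "k < x" for x
    using assms(2)[OF that] that by (simp add: le_divide_eq algebra_simps)
  then show ?thesis
    unfolding tendsto_right_deriv_convex(2)[OF assms(1)] by (intro cInf_greatest) auto
qed

lemma left_deriv_convex_reflect:
  fixes \<phi> :: "real \<Rightarrow> real"
  assumes "convex_on UNIV \<phi>"
  shows "left_deriv \<phi> k = - right_deriv (\<lambda>x. \<phi> (- x)) (- k)"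
proof -
  let ?R = "right_deriv (\<lambda>x. \<phi> (- x)) (- k)"
  have "((\<lambda>h. (\<phi> (- h) - \<phi> k) / (h + k)) \<longlongrightarrow> ?R) (at_right (- k))"
    using tendsto_right_deriv_convex(1)[OF convex_on_reflect[OF assms], of "- k"] by simp
  moreover have "(\<phi> (- h) - \<phi> k) / (- h - k) = - ((\<phi> (- h) - \<phi> k) / (h + k))" for h
    using divide_minus_right[of "\<phi> (- h) - \<phi> k" "h + k"] by simp
  ultimately have "((\<lambda>h. (\<phi> (- h) - \<phi> k) / (- h - k)) \<longlongrightarrow> - ?R) (at_right (- k))"
    by (simp add: tendsto_minus)
  then have "((\<lambda>h. (\<phi> h - \<phi> k) / (h - k)) \<longlongrightarrow> - ?R) (at_left k)"
    by (simp add: at_left_minus filterlim_filtermap)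
  then show ?thesis
    unfolding left_deriv_def by (intro tendsto_Lim) auto
qed

section \<open>Comparing one-sided derivatives of convex minorants\<close>

lemma convex_minorant_support_le:
  assumes "convex_on UNIV m" "\<And>x. m x \<le> f x"
  shows "convex_minorant f k + right_deriv (convex_minorant f) k * (x - k) \<le> f x"
  using order_trans[OF right_deriv_convex_support[OF convex_on_convex_minorant[OF assms]]
      convex_minorant_le[OF assms]] .

context
  fixes f g mf mg :: "real \<Rightarrow> real" and a B :: real
  assumes mf: "convex_on UNIV mf" "\<And>x. mf x \<le> f x"
    and mg: "convex_on UNIV mg" "\<And>x. mg x \<le> g x"
    and up: "\<And>x y. x \<le> y \<Longrightarrow> (g y - f y) - (g x - f x) \<le> a * (y - x)"
    and lo: "\<And>x y. x \<le> y \<Longrightarrow> - (B * (y - x)) \<le> (g y - f y) - (g x - f x)"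
begin

lemma convex_minorant_gap_of_right_deriv_gt:
  assumes "right_deriv (convex_minorant f) k + a < right_deriv (convex_minorant g) k"
  shows "convex_minorant f k + (g k - f k) \<le> convex_minorant g k"
proof (rule ccontr)
  define \<phi> where "\<phi> = convex_minorant f"
  define \<psi> where "\<psi> = convex_minorant g"
  define r where "r = right_deriv \<phi> k + a"
  define s where "s = right_deriv \<psi> k"
  define \<eta> where "\<eta> = \<phi> k + (g k - f k) - \<psi> k"
  define \<epsilon> where "\<epsilon> = \<eta> * (s - r) / (s - r + (a + B))"
  assume "\<not> convex_minorant f k + (g k - f k) \<le> convex_minorant g k"
  then have "0 < \<eta>"
    by (simp add: \<eta>_def \<phi>_def \<psi>_def)
  have "0 < s - r"
    using assms by (simp add: r_def s_def \<phi>_def \<psi>_def)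
  have aB: "0 \<le> a + B"
    using up[of k "k + 1"] lo[of k "k + 1"] by simp
  then have \<epsilon>: "0 < \<epsilon>" "\<epsilon> \<le> \<eta>" "\<epsilon> * (a + B) = (\<eta> - \<epsilon>) * (s - r)"
    using \<open>0 < \<eta>\<close> \<open>0 < s - r\<close> mult_nonneg_nonneg[OF less_imp_le[OF \<open>0 < \<eta>\<close>] aB]
    by (auto simp: \<epsilon>_def field_simps)
  have \<phi>: "\<phi> k + (r - a) * (x - k) \<le> f x" for x
    using convex_minorant_support_le[OF mf] by (simp add: r_def \<phi>_def)
  have \<psi>: "\<psi> k + s * (x - k) \<le> g x" for x
    using convex_minorant_support_le[OF mg] by (simp add: s_def \<psi>_def)
  have "\<psi> k + \<epsilon> + r * (x - k) \<le> g x" for x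
  proof (cases "x \<le> k")
    case True
    then show ?thesis
      using up[OF True] \<phi>[of x] \<epsilon>(2) by (simp add: \<eta>_def algebra_simps)
  next
    case False
    show ?thesis
    proof (cases "\<epsilon> \<le> (s - r) * (x - k)")
      case True
      then show ?thesis
        using \<psi>[of x] by (simp add: algebra_simps)
    next
      case False
      \<comment> \<open>Close to k the lower bound for g inherited from f through the B-Lipschitz bound takes over;
        \<epsilon> was chosen to make the two regimes meet.\<close>
      have "(a + B) * (x - k) * (s - r) = (a + B) * ((s - r) * (x - k))"
        by (simp add: ac_simps)
      also have "\<dots> \<le> (a + B) * \<epsilon>"
        using False aB by (intro mult_left_mono) auto
      also have "\<dots> = (\<eta> - \<epsilon>) * (s - r)"
        using \<epsilon>(3) by (simp add: mult.commute)
      finally have "(a + B) * (x - k) \<le> \<eta> - \<epsilon>"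
        using \<open>0 < s - r\<close> by (rule mult_right_le_imp_le)
      then show ?thesis
        using lo[of k x] \<open>\<not> x \<le> k\<close> \<phi>[of x] by (simp add: \<eta>_def algebra_simps)
    qed
  qed
  then have "\<psi> k + \<epsilon> + r * (k - k) \<le> \<psi> k"
    unfolding \<psi>_def by (intro convex_minorant_greatest convex_on_affine)
  with \<epsilon>(1) show False
    by simp
qed

lemma right_deriv_convex_minorant_le:
  "right_deriv (convex_minorant g) k \<le> right_deriv (convex_minorant f) k + a"
proof (rule ccontr)
  define \<phi> where "\<phi> = convex_minorant f"
  define \<psi> where "\<psi> = convex_minorant g"
  define t where "t = right_deriv \<phi> k"
  define s where "s = right_deriv \<psi> k"
  assume "\<not> right_deriv (convex_minorant g) k \<le> right_deriv (convex_minorant f) k + a"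
  then have ts: "t + a < s"
    by (simp add: s_def t_def \<phi>_def \<psi>_def)
  then have gap: "\<phi> k + (g k - f k) \<le> \<psi> k"
    using convex_minorant_gap_of_right_deriv_gt by (simp add: s_def t_def \<phi>_def \<psi>_def)
  have \<phi>_convex: "convex_on UNIV \<phi>"
    using convex_on_convex_minorant[OF mf] by (simp add: \<phi>_def)
  have line: "\<phi> k + (s - a) * (x - k) \<le> f x" for x
  proof (cases "k \<le> x")
    case True
    then show ?thesis
      using up[OF True] gap convex_minorant_support_le[OF mg, of k x] by (simp add: s_def \<psi>_def algebra_simps)
  next
    case False
    then have "(s - a) * (x - k) \<le> t * (x - k)"
      using ts by (intro mult_right_mono_neg) auto
    then show ?thesis
      using convex_minorant_support_le[OF mf, of k x] by (simp add: t_def \<phi>_def)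
  qed
  have "\<phi> k + (s - a) * (x - k) \<le> \<phi> x" for x
    using convex_minorant_greatest[OF convex_on_affine line] by (simp add: \<phi>_def)
  then have "s - a \<le> t"
    unfolding t_def by (intro right_deriv_convex_ge[OF \<phi>_convex])
  with ts show False
    by simp
qed

end

lemma left_deriv_convex_minorant_le:
  fixes f g :: "real \<Rightarrow> real"
  assumes mf: "convex_on UNIV mf" "\<And>x. mf x \<le> f x"
    and mg: "convex_on UNIV mg" "\<And>x. mg x \<le> g x"
    and up: "\<And>x y. x \<le> y \<Longrightarrow> (g y - f y) - (g x - f x) \<le> a * (y - x)"
    and lo: "\<And>x y. x \<le> y \<Longrightarrow> - (B * (y - x)) \<le> (g y - f y) - (g x - f x)"
  shows "left_deriv (convex_minorant g) k \<le> left_deriv (convex_minorant f) k + a"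
proof -
  let ?f = "\<lambda>x. f (- x)" and ?g = "\<lambda>x. g (- x)"
  have "right_deriv (convex_minorant ?f) (- k) \<le> right_deriv (convex_minorant ?g) (- k) + a"
  proof (rule right_deriv_convex_minorant_le)
    show "convex_on UNIV (\<lambda>x. mg (- x))" "convex_on UNIV (\<lambda>x. mf (- x))"
      using convex_on_reflect mf(1) mg(1) by blast+
    show "mg (- x) \<le> ?g x" "mf (- x) \<le> ?f x" for x
      using mf(2) mg(2) by blast+
    show "(?f y - ?g y) - (?f x - ?g x) \<le> a * (y - x)" if "x \<le> y" for x y
      using up[of "- y" "- x"] that by (simp add: algebra_simps)
    show "- (B * (y - x)) \<le> (?f y - ?g y) - (?f x - ?g x)" if "x \<le> y" for x y
      using lo[of "- y" "- x"] that by (simp add: algebra_simps)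
  qed
  moreover have "convex_minorant ?f = (\<lambda>x. convex_minorant f (- x))"
    "convex_minorant ?g = (\<lambda>x. convex_minorant g (- x))"
    by (simp_all add: convex_minorant_reflect fun_eq_iff)
  ultimately show ?thesis
    using left_deriv_convex_reflect convex_on_convex_minorant[OF mf] convex_on_convex_minorant[OF mg]
    by simp
qed

section \<open>Put functions and the measures \<mu>_u\<close>

lemma integral_mono_measure:
  fixes f :: "'a \<Rightarrow> real"
  assumes sets: "sets M = sets N" and le: "M \<le> N"
    and f: "f \<in> borel_measurable N" "\<And>x. 0 \<le> f x" "integrable N f"
  shows "integrable M f" and "integral\<^sup>L M f \<le> integral\<^sup>L N f"
proof -
  have fM: "f \<in> borel_measurable M"
    using f(1) sets by (simp cong: measurable_cong_sets)
  have nn_le: "(\<integral>\<^sup>+x. ennreal (f x) \<partial>M) \<le> (\<integral>\<^sup>+x. ennreal (f x) \<partial>N)"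
    by (rule nn_integral_mono_measure[OF sets le])
  have nn_fin: "(\<integral>\<^sup>+x. ennreal (f x) \<partial>N) < \<infinity>"
    using f by (simp add: integrable_iff_bounded)
  show "integrable M f"
    using fM f(2) nn_le nn_fin by (simp add: integrable_iff_bounded)
  show "integral\<^sup>L M f \<le> integral\<^sup>L N f"
    using nn_le nn_fin f(2)
    by (simp add: integral_eq_nn_integral[OF fM] integral_eq_nn_integral[OF f(1)] enn2real_mono)
qed

lemma integrable_put_integrand:
  fixes M :: "real measure"
  assumes "finite_measure M" "integrable M (\<lambda>x. x)"
  shows "integrable M (\<lambda>x. max (k - x) 0)"
proof -
  have "integrable M (\<lambda>x. k - x)"
    using assms by (intro Bochner_Integration.integrable_diff finite_measure.integrable_const)
  then show ?thesis
    by (intro integrable_max) auto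
qed

lemma convex_on_put_integrand: "convex_on UNIV (\<lambda>x::real. max (k - x) 0)"
proof (rule convex_onI)
  fix t x y :: real
  assume t: "0 < t" "t < 1"
  have "k - ((1 - t) *\<^sub>R x + t *\<^sub>R y) = (1 - t) * (k - x) + t * (k - y)"
    by (simp add: algebra_simps)
  also have "\<dots> \<le> (1 - t) * max (k - x) 0 + t * max (k - y) 0"
    using t by (intro add_mono mult_left_mono) auto
  finally show "max (k - ((1 - t) *\<^sub>R x + t *\<^sub>R y)) 0 \<le> (1 - t) * max (k - x) 0 + t * max (k - y) 0"
    using t by simp
qed simp

lemma put_fun_increment_bounds:
  fixes M N :: "real measure"
  assumes sets: "sets M = sets borel" "sets N = sets borel" and le: "M \<le> N"
    and fin: "finite_measure N" and int: "\<And>k. integrable N (\<lambda>z. max (k - z) 0)"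
    and "x \<le> y"
  shows "0 \<le> (put_fun N y - put_fun N x) - (put_fun M y - put_fun M x)"
    and "(put_fun N y - put_fun N x) - (put_fun M y - put_fun M x)
           \<le> (measure N (space N) - measure M (space M)) * (y - x)"
proof -
  \<comment> \<open>The left-hand side is the integral of w against N - M, and 0 \<le> w \<le> y - x.\<close>
  define w where "w z = max (y - z) 0 - max (x - z) 0" for z
  have w_bounds: "0 \<le> w z" "w z \<le> y - x" for z
    using \<open>x \<le> y\<close> by (auto simp: w_def max_def)
  have w_meas: "w \<in> borel_measurable borel"
    unfolding w_def by measurable
  have sets_eq: "sets M = sets N"
    using sets by simp
  have meas: "g \<in> borel_measurable N" if "g \<in> borel_measurable borel" for g :: "real \<Rightarrow> real"
    using that sets(2) by (simp cong: measurable_cong_sets)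
  have intM: "integrable M (\<lambda>z. max (k - z) 0)" for k
    by (rule integral_mono_measure(1)[OF sets_eq le meas _ int]) auto
  have wN: "integrable N w" "integral\<^sup>L N w = put_fun N y - put_fun N x"
    unfolding w_def put_fun_def using int by auto
  have wM: "integrable M w" "integral\<^sup>L M w = put_fun M y - put_fun M x"
    unfolding w_def put_fun_def using intM by auto
  have constM: "integrable M (\<lambda>z. y - x)"
    using \<open>x \<le> y\<close> fin by (intro integral_mono_measure(1)[OF sets_eq le]) (auto intro: finite_measure.integrable_const)
  have "integral\<^sup>L M w \<le> integral\<^sup>L N w"
    by (rule integral_mono_measure(2)[OF sets_eq le meas[OF w_meas] w_bounds(1) wN(1)])
  then show "0 \<le> (put_fun N y - put_fun N x) - (put_fun M y - put_fun M x)"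
    using wN wM by simp
  have int_compl: "integrable N (\<lambda>z. (y - x) - w z)"
    using fin wN(1) by (intro Bochner_Integration.integrable_diff finite_measure.integrable_const)
  have "integral\<^sup>L M (\<lambda>z. (y - x) - w z) \<le> integral\<^sup>L N (\<lambda>z. (y - x) - w z)"
    using w_meas w_bounds by (intro integral_mono_measure(2)[OF sets_eq le meas _ int_compl]) auto
  moreover have "integral\<^sup>L M (\<lambda>z. (y - x) - w z) = measure M (space M) * (y - x) - integral\<^sup>L M w"
    using constM wM by (subst Bochner_Integration.integral_diff) auto
  ultimately show "(put_fun N y - put_fun N x) - (put_fun M y - put_fun M x)
      \<le> (measure N (space N) - measure M (space M)) * (y - x)"
    using wN wM fin int_compl by (simp add: Bochner_Integration.integral_diff algebra_simps finite_measure.integrable_const)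
qed

lemma finite_measure_le_measureI:
  assumes "finite_measure M" "finite_measure N" "sets M = sets N"
    and "\<And>A. A \<in> sets M \<Longrightarrow> measure M A \<le> measure N A"
  shows "M \<le> N"
  using assms by (simp add: le_measure finite_measure.emeasure_eq_measure)

lemma
  shows sets_mu_u [simp]: "sets (mu_u M u) = sets borel"
    and space_mu_u [simp]: "space (mu_u M u) = UNIV"
  unfolding mu_u_def using sets.sigma_sets_eq[of borel]
  by (simp_all add: sets_measure_of_conv space_measure_of_conv)

(* No sign condition on u is needed: ennreal truncates a negative atom mass to 0. *)
lemma emeasure_mu_u:
  assumes sets: "sets M = sets borel" and A: "A \<in> sets borel"
  shows "emeasure (mu_u M u) A = emeasure M (A \<inter> {..<quantile M u})
           + ennreal (u - measure M {..<quantile M u}) * indicator A (quantile M u)"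
proof -
  define G where "G = quantile M u"
  define \<mu> where "\<mu> A = emeasure M (A \<inter> {..<G}) + ennreal (u - measure M {..<G}) * indicator A G" for A
  have "countably_additive (sets borel) \<mu>"
  proof (rule countably_additiveI)
    fix B :: "nat \<Rightarrow> real set"
    assume B: "range B \<subseteq> sets borel" "disjoint_family B"
    have "(\<Sum>i. emeasure M (B i \<inter> {..<G})) = emeasure M (\<Union>i. B i \<inter> {..<G})"
      using B sets by (intro suminf_emeasure) (auto simp: disjoint_family_on_def)
    moreover have "(\<Sum>i. ennreal (u - measure M {..<G}) * indicator (B i) G)
        = ennreal (u - measure M {..<G}) * indicator (\<Union>i. B i) G"
      using suminf_indicator[OF B(2)] by simp
    ultimately show "(\<Sum>i. \<mu> (B i)) = \<mu> (\<Union>i. B i)"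
      unfolding \<mu>_def by (subst suminf_add[symmetric]) auto
  qed
  moreover have "positive (sets borel) \<mu>"
    by (simp add: positive_def \<mu>_def)
  moreover have "sigma_algebra UNIV (sets borel)"
    using sets.sigma_algebra_axioms[of borel] by simp
  moreover have "mu_u M u = measure_of UNIV (sets borel) \<mu>"
    unfolding mu_u_def \<mu>_def G_def ..
  ultimately have "emeasure (mu_u M u) A = \<mu> A"
    using emeasure_measure_of_sigma[OF _ _ _ A] by simp
  then show ?thesis
    by (simp add: \<mu>_def G_def)
qed

context real_distribution
begin

lemma quantile_set_nonempty_bdd_below:
  assumes "0 < u" "u < 1"
  shows "{x. u \<le> measure M {..x}} \<noteq> {}" and "bdd_below {x. u \<le> measure M {..x}}"
proof -
  obtain x where "u < cdf M x"
    using eventually_happens[OF order_tendstoD(1)[OF cdf_lim_at_top_prob \<open>u < 1\<close>]] by auto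
  then show "{x. u \<le> measure M {..x}} \<noteq> {}"
    by (auto simp: cdf_def2 intro!: exI[of _ x])
  obtain b where b: "\<And>x. x \<le> b \<Longrightarrow> cdf M x < u"
    using order_tendstoD(2)[OF cdf_lim_at_bot \<open>0 < u\<close>] by (auto simp: eventually_at_bot_linorder)
  have "b \<le> x" if "u \<le> measure M {..x}" for x
    using b[of x] that by (cases "x \<le> b") (auto simp: cdf_def2)
  then show "bdd_below {x. u \<le> measure M {..x}}"
    by (rule bdd_belowI[of _ b]) auto
qed

lemma measure_atMost_quantile_ge:
  assumes "0 < u" "u < 1"
  shows "u \<le> measure M {..quantile M u}"
proof -
  note S = quantile_set_nonempty_bdd_below[OF assms]
  have "u \<le> cdf M x" if x: "quantile M u < x" for x
  proof -
    obtain s where "u \<le> measure M {..s}" "s < x"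
      using cInf_lessD[OF S(1), of x] x by (auto simp: quantile_def)
    then show ?thesis
      using cdf_nondecreasing[of s x] by (simp add: cdf_def2)
  qed
  then have "eventually (\<lambda>x. u \<le> cdf M x) (at_right (quantile M u))"
    by (auto simp: eventually_at_right_field intro!: exI[of _ "quantile M u + 1"])
  with cdf_is_right_cont have "u \<le> cdf M (quantile M u)"
    by (intro tendsto_lowerbound) (auto simp: continuous_within)
  then show ?thesis
    by (simp add: cdf_def2)
qed

lemma measure_lessThan_quantile_le:
  assumes "0 < u" "u < 1"
  shows "measure M {..<quantile M u} \<le> u"
proof -
  note S = quantile_set_nonempty_bdd_below[OF assms]
  have "cdf M x \<le> u" if "x < quantile M u" for x
    using cInf_lower[OF _ S(2), of x] that by (force simp: quantile_def cdf_def2)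
  then have "eventually (\<lambda>x. cdf M x \<le> u) (at_left (quantile M u))"
    by (auto simp: eventually_at_left_field intro!: exI[of _ "quantile M u - 1"])
  then show ?thesis
    by (rule tendsto_upperbound[OF cdf_at_left]) simp
qed

lemma quantile_mono:
  assumes "0 < u" "u \<le> v" "v < 1"
  shows "quantile M u \<le> quantile M v"
  unfolding quantile_def using assms quantile_set_nonempty_bdd_below[of u] quantile_set_nonempty_bdd_below[of v]
  by (intro cInf_superset_mono) auto

lemma measure_mu_u:
  assumes "0 < u" "u < 1" "A \<in> sets borel"
  shows "measure (mu_u M u) A = measure M (A \<inter> {..<quantile M u})
           + (u - measure M {..<quantile M u}) * indicator A (quantile M u)"
proof -
  define G where "G = quantile M u"
  define c where "c = u - measure M {..<G}"
  have c: "0 \<le> c"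
    using measure_lessThan_quantile_le[OF assms(1,2)] by (simp add: c_def G_def)
  have "emeasure (mu_u M u) A = ennreal (measure M (A \<inter> {..<G}) + c * indicator A G)"
    using emeasure_mu_u[OF events_eq_borel assms(3), of u] c
    by (cases "G \<in> A") (simp_all add: G_def c_def emeasure_eq_measure ennreal_plus)
  then show ?thesis
    using c by (intro measure_eq_emeasure_eq_ennreal) (simp_all add: G_def c_def)
qed

lemma measure_mu_u_bounds:
  assumes "0 < u" "u < 1" "A \<in> sets borel"
  shows "measure M (A \<inter> {..<quantile M u}) \<le> measure (mu_u M u) A"
    and "measure (mu_u M u) A \<le> measure M (A \<inter> {..quantile M u})"
proof -
  define G where "G = quantile M u"
  have atom: "0 \<le> u - measure M {..<G}" "u - measure M {..<G} \<le> measure M {G}"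
    using measure_lessThan_quantile_le[OF assms(1,2)] measure_atMost_quantile_ge[OF assms(1,2)]
      finite_measure_Union[of "{..<G}" "{G}"] by (auto simp: G_def ivl_disj_un_singleton(2)[symmetric])
  show "measure M (A \<inter> {..<quantile M u}) \<le> measure (mu_u M u) A"
    using atom(1) by (simp add: measure_mu_u[OF assms] G_def)
  have "measure M (A \<inter> {..G}) = measure M (A \<inter> {..<G}) + measure M (A \<inter> {G})"
    using assms(3) by (subst finite_measure_Union[symmetric]) (auto intro: arg_cong[where f = "measure M"])
  moreover have "(u - measure M {..<G}) * indicator A G \<le> measure M (A \<inter> {G})"
    using atom by (auto simp: indicator_def)
  ultimately show "measure (mu_u M u) A \<le> measure M (A \<inter> {..quantile M u})"
    by (simp add: measure_mu_u[OF assms] G_def)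
qed

lemma finite_measure_mu_u:
  assumes "0 < u" "u < 1"
  shows "finite_measure (mu_u M u)" and "measure (mu_u M u) (space (mu_u M u)) = u"
proof -
  show "measure (mu_u M u) (space (mu_u M u)) = u"
    using measure_mu_u[OF assms, of UNIV] by simp
  show "finite_measure (mu_u M u)"
    using emeasure_mu_u[of M UNIV u] by (intro finite_measureI) (simp add: emeasure_eq_measure)
qed

lemma mu_u_le:
  assumes "0 < u" "u < 1"
  shows "mu_u M u \<le> M"
proof (rule finite_measure_le_measureI)
  fix A assume "A \<in> sets (mu_u M u)"
  then show "measure (mu_u M u) A \<le> measure M A"
    using measure_mu_u_bounds(2)[OF assms, of A] finite_measure_mono[of "A \<inter> {..quantile M u}" A]
    by simp
qed (auto simp: finite_measure_mu_u[OF assms] finite_measure_axioms)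

lemma mu_u_mono:
  assumes "0 < u" "u \<le> v" "v < 1"
  shows "mu_u M u \<le> mu_u M v"
proof (rule finite_measure_le_measureI)
  fix A assume A: "A \<in> sets (mu_u M u)"
  show "measure (mu_u M u) A \<le> measure (mu_u M v) A"
  proof (cases "quantile M u = quantile M v")
    case True
    then show ?thesis
      using A assms by (simp add: measure_mu_u indicator_def)
  next
    case False
    then have "quantile M u < quantile M v"
      using quantile_mono[OF assms] by simp
    then have "measure M (A \<inter> {..quantile M u}) \<le> measure M (A \<inter> {..<quantile M v})"
      using A by (intro finite_measure_mono) auto
    then show ?thesis
      using A assms measure_mu_u_bounds[of u A] measure_mu_u_bounds[of v A] by simp
  qed
qed (use assms in \<open>auto simp: finite_measure_mu_u\<close>)

lemma put_fun_mu_u_increment_bounds: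
  assumes "integrable M (\<lambda>x. x)" "0 < u" "u \<le> v" "v < 1" "x \<le> y"
  shows "0 \<le> (put_fun (mu_u M v) y - put_fun (mu_u M v) x) - (put_fun (mu_u M u) y - put_fun (mu_u M u) x)"
    and "(put_fun (mu_u M v) y - put_fun (mu_u M v) x) - (put_fun (mu_u M u) y - put_fun (mu_u M u) x)
           \<le> (v - u) * (y - x)"
proof -
  have u: "0 < u" "u < 1" and v: "0 < v" "v < 1"
    using assms by simp_all
  have "integrable (mu_u M v) (\<lambda>z. max (k - z) 0)" for k
    using integrable_put_integrand[OF finite_measure_axioms assms(1)]
    by (intro integral_mono_measure(1)[OF _ mu_u_le[OF v]]) auto
  note bounds = put_fun_increment_bounds[OF sets_mu_u sets_mu_u mu_u_mono[OF assms(2-4)]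
      finite_measure_mu_u(1)[OF v] this assms(5)]
  show "0 \<le> (put_fun (mu_u M v) y - put_fun (mu_u M v) x) - (put_fun (mu_u M u) y - put_fun (mu_u M u) x)"
    by (rule bounds(1))
  show "(put_fun (mu_u M v) y - put_fun (mu_u M v) x) - (put_fun (mu_u M u) y - put_fun (mu_u M u) x)
      \<le> (v - u) * (y - x)"
    using bounds(2) finite_measure_mu_u(2)[OF u] finite_measure_mu_u(2)[OF v] by simp
qed

lemma E_fun_nonneg:
  assumes "integrable M (\<lambda>x. x)" "finite_measure N" "integrable N (\<lambda>x. x)" "cx_le M N"
    and "0 < u" "u < 1"
  shows "0 \<le> E_fun M N u k"
proof -
  have int: "integrable M (\<lambda>x. max (k - x) 0)"
    by (rule integrable_put_integrand[OF finite_measure_axioms assms(1)])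
  have "put_fun (mu_u M u) k \<le> put_fun M k"
    unfolding put_fun_def by (rule integral_mono_measure(2)[OF _ mu_u_le[OF assms(5,6)] _ _ int]) auto
  also have "put_fun M k \<le> put_fun N k"
    using assms(4) convex_on_put_integrand int integrable_put_integrand[OF assms(2,3)]
    unfolding cx_le_def put_fun_def by blast
  finally show ?thesis
    by (simp add: E_fun_def)
qed

end

theorem lemma6p4:
  fixes \<mu> \<nu> :: "real measure" and u v k :: real
  assumes "prob_space \<mu>" and "prob_space \<nu>"
    and "sets \<mu> = sets borel" and "sets \<nu> = sets borel"
    and "integrable \<mu> (\<lambda>x. x)" and "integrable \<nu> (\<lambda>x. x)"
    and "cx_le \<mu> \<nu>"
    and "is_interval {k. put_fun \<nu> k - put_fun \<mu> k > 0}"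
    and "0 < u" and "u < v" and "v < 1"
  shows "left_deriv (convex_minorant (E_fun \<mu> \<nu> u)) k - (v - u)
           \<le> left_deriv (convex_minorant (E_fun \<mu> \<nu> v)) k
       \<and> left_deriv (convex_minorant (E_fun \<mu> \<nu> v)) k
           \<le> left_deriv (convex_minorant (E_fun \<mu> \<nu> u)) k
       \<and> right_deriv (convex_minorant (E_fun \<mu> \<nu> u)) k - (v - u)
           \<le> right_deriv (convex_minorant (E_fun \<mu> \<nu> v)) k
       \<and> right_deriv (convex_minorant (E_fun \<mu> \<nu> v)) k
           \<le> right_deriv (convex_minorant (E_fun \<mu> \<nu> u)) k"
proof -
  interpret real_distribution \<mu>
    using assms(1,3) by (simp add: real_distribution_def real_distribution_axioms_def)
  let ?f = "E_fun \<mu> \<nu> u" and ?g = "E_fun \<mu> \<nu> v"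
  have zero: "convex_on UNIV (\<lambda>_. 0::real)"
    by (simp add: convex_on_const)
  have nonneg: "0 \<le> ?f x" "0 \<le> ?g x" for x
    using E_fun_nonneg[OF assms(5) prob_space.finite_measure[OF assms(2)] assms(6,7)] assms(9-11)
    by simp_all
  have incr: "- ((v - u) * (y - x)) \<le> (?g y - ?f y) - (?g x - ?f x)"
    "(?g y - ?f y) - (?g x - ?f x) \<le> 0 * (y - x)"
    "(?f y - ?g y) - (?f x - ?g x) \<le> (v - u) * (y - x)"
    "- (0 * (y - x)) \<le> (?f y - ?g y) - (?f x - ?g x)" if "x \<le> y" for x y
    using put_fun_mu_u_increment_bounds[OF assms(5,9) less_imp_le[OF assms(10)] assms(11) that]
    by (simp_all add: E_fun_def)
  note hulls = zero nonneg(1) zero nonneg(2)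
  note hulls' = zero nonneg(2) zero nonneg(1)
  show ?thesis
    using left_deriv_convex_minorant_le[OF hulls incr(2,1), where k = k]
      left_deriv_convex_minorant_le[OF hulls' incr(3,4), where k = k]
      right_deriv_convex_minorant_le[OF hulls incr(2,1), where k = k]
      right_deriv_convex_minorant_le[OF hulls' incr(3,4), where k = k]
    by linarith
qed

end
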